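(* In the setting of the context, fix any agent $i\in\mathcal V$. Suppose $e_{2,i}^{\max}>0$ is a constant such that, for all $t\ge0$, $$\|\widehat W_i(t)\|\,\|\sigma(\widehat\Phi_i(\hat x_i(t)))\|+\|K_1\|\,\|z_i(t)\|+\|K_1C_i^\top\|\,\|e_{3,i}(t)\|\le e_{2,i}^{\max}.$$ Such a constant exists because these signals are bounded. Then the event times generated by the event-trigger rule of agent $i$ satisfy, for every $k\in\mathbb Z_{\ge0}$, $$t_{k+1}^i-t_k^i\ge\frac{1}{e_{2,i}^{\max}}\sqrt{\frac{\epsilon}{N\phi_1}}.$$
   Context: Graph: $\mathcal G=(\mathcal V,\mathcal E,\mathcal A)$ is a static, undirected, connected graph on $\mathcal V=\{1,\dots,N\}$. It has a symmetric weighted adjacency matrix $\mathcal A=[a_{ij}]$ with $a_{ii}=0$, $a_{ij}>0$ if $(j,i)\in\mathcal E$ and $a_{ij}=0$ otherwise. The neighbor set is $\mathcal N_i=\{j:(j,i)\in\mathcal E\}$, the Laplacian is $L=\Delta-\mathcal A$, and $\Delta=\mathrm{diag}(\sum_j a_{ij})$. System: $\dot x_0(t)=f(x_0(t))+d(t)$ with $x_0(t)\in\mathbb R^n$, where: - $f:\mathbb R^n\to\mathbb R^n$ is unknown and locally Lipschitz; - $d$ is continuous with $\|d(t)\|\le d_{\max}$ for all $t\ge0$; - $x_0(t)$ remains in a compact set $\mathcal D\subset\mathbb R^n$ for all $t\ge0$. On $\mathcal D$, $f(x)=W_0^\top\sigma(\Phi(x))+\varepsilon(x)$. Here $W_0\in\mathbb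 R^{L\times n}$ is an unknown constant matrix, $\sigma:\mathbb R^p\to\mathbb R^L$ is a vector of bounded continuous activation functions, $\Phi:\mathbb R^n\to\mathbb R^p$ is an (unknown) inner deep network $\Phi=W_\ell^\top\phi_\ell\circ\cdots\circ W_1^\top\phi_1$, and $\varepsilon$ is a bounded reconstruction error. Sensors: agent $i$ continuously measures $y_i(t)=C_ix_0(t)$ with known $C_i\in\mathbb R^{m\times n}$. Set $C=\mathrm{diag}(C_1,\dots,C_N)\in\mathbb R^{mN\times nN}$. Event-triggered sampling: each agent $i$ has an increasing sequence of event times $\{t_k^i\}_{k\ge0}$. The sampled estimate is the zero-order hold $\tilde x_i(t)=\hat x_i(t_k^i)$ for $t\in[t_k^i,t_{k+1}^i)$, and it is available to agent $i$ and all its neighbors. Observer of agent $i$: - $\dot{\hat x}_i=\widehat W_i^\top(t)\sigma(\widehat\Phi_i(\hat x_i))+K_1\big(z_i-C_i^\top e_{3,i}\big)$, - $z_i=\sum_{j\in\mathcal N_i}a_{ij}(\tilde x_j-\tilde x_i)$, - $\hat y_i=C_i\hat x_i$. The estimated inner network $\widehat\Phi_i$ is piecewise constant in time: it is replaced only at a discrete sequence of switching times $\{T_p^i\}$ (offline retraining), and between switches it is a fixed continuous function $\mathbb R^n\to\mathbb R^p$. $K_1\in\mathbb R^{n\times n}$ is a symmetric gain matrix. Errors: - $e_{1,i}=\hat x_i-x_0$, - $e_{2,i}=\tilde x_i-\hat x_i$, - $e_{3,i}=\hat y_i-y_i$. Outer-weight update: let $\omega_i=\mathrm{vec}(\widehat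 W_i)$. Then $\dot\omega_i=\mathrm{proj}(\mu_i,\omega_i)$, where $\mu_i=-\mathrm{vec}\big(\Gamma_i\sigma(\widehat\Phi_i(\hat x_i))e_{3,i}^\top C_i\big)$, $\Gamma_i$ is positive definite, and $\mathrm{proj}$ is a continuous projection operator keeping $\|\widehat W_i(t)\|\le\bar\omega$ for all $t$. Gains: $\kappa>0$, $k_2>1/\kappa$, $\epsilon>0$. Event-trigger rule: $t_{k+1}^i=\inf\{t>t_k^i:\ \phi_1\|e_{2,i}(t)\|^2\ge\phi_2\|z_i(t)\|^2+\epsilon/N\}$, where $\phi_1=\frac{k_2}{2}+\frac{\kappa}{2}\|L\otimes K_1\|^2$ and $\phi_2=\frac{k_2}{4\|L\otimes I_n\|^2}$. *)

theory Defs
  imports "HOL-Analysis.Analysis"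
begin

definition valid_adjacency :: "nat \<Rightarrow> (nat \<Rightarrow> nat \<Rightarrow> real) \<Rightarrow> bool" where
  "valid_adjacency N a \<longleftrightarrow> (\<forall>i j. a i j = a j i) \<and> (\<forall>i. a i i = 0) \<and> (\<forall>i j. a i j \<ge> 0)"

definition graph_connected :: "nat \<Rightarrow> (nat \<Rightarrow> nat \<Rightarrow> real) \<Rightarrow> bool" where
  "graph_connected N a \<longleftrightarrow>
     (\<forall>i\<in>{1..N}. \<forall>j\<in>{1..N}.
        (\<lambda>u v. u \<in> {1..N} \<and> v \<in> {1..N} \<and> a u v > 0)\<^sup>*\<^sup>* i j)"

definition nbrs :: "nat \<Rightarrow> (nat \<Rightarrow> nat \<Rightarrow> real) \<Rightarrow> nat \<Rightarrow> nat set" where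
  "nbrs N a i = {j \<in> {1..N}. a i j > 0}"

definition lap :: "nat \<Rightarrow> (nat \<Rightarrow> nat \<Rightarrow> real) \<Rightarrow> nat \<Rightarrow> nat \<Rightarrow> real" where
  "lap N a i j = (if i = j then (\<Sum>k\<in>{1..N}. a i k) else 0) - a i j"

text \<open>Norm of the Kronecker product M (x) K, where M is N x N (indices 1..N);
  matrix norm = Euclidean norm of the vectorised matrix (Frobenius norm),
  which is also the library's norm on real^'n^'m.\<close>
definition kron_norm :: "nat \<Rightarrow> (nat \<Rightarrow> nat \<Rightarrow> real) \<Rightarrow> real^'n^'k \<Rightarrow> real" where
  "kron_norm N M K = sqrt (\<Sum>i\<in>{1..N}. \<Sum>j\<in>{1..N}. (norm (M i j *\<^sub>R K))\<^sup>2)"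

definition zsig :: "nat \<Rightarrow> (nat \<Rightarrow> nat \<Rightarrow> real) \<Rightarrow> (nat \<Rightarrow> real \<Rightarrow> real^'n) \<Rightarrow> nat \<Rightarrow> real \<Rightarrow> real^'n" where
  "zsig N a xt i t = (\<Sum>j\<in>nbrs N a i. a i j *\<^sub>R (xt j t - xt i t))"

definition e3sig :: "(nat \<Rightarrow> real^'n^'m) \<Rightarrow> (real \<Rightarrow> real^'n) \<Rightarrow> (nat \<Rightarrow> real \<Rightarrow> real^'n) \<Rightarrow> nat \<Rightarrow> real \<Rightarrow> real^'m" where
  "e3sig C x0 xh i t = C i *v xh i t - C i *v x0 t"

definition outer :: "real^'a \<Rightarrow> real^'b \<Rightarrow> real^'b^'a" where
  "outer u v = (\<chi> r s. u $ r * v $ s)"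

text \<open>Event-trigger set after the event time s of agent j: the trigger quantities are
  evaluated with the currently held sample x~_j = xhat_j(s), i.e.
  e_{2,j}(t) = xhat_j(s) - xhat_j(t) and z_j(t) = sum a_jl (x~_l(t) - xhat_j(s)).\<close>
definition trigger_set ::
  "nat \<Rightarrow> (nat \<Rightarrow> nat \<Rightarrow> real) \<Rightarrow> (nat \<Rightarrow> real \<Rightarrow> real^'n) \<Rightarrow> (nat \<Rightarrow> real \<Rightarrow> real^'n)
    \<Rightarrow> real \<Rightarrow> real \<Rightarrow> real \<Rightarrow> nat \<Rightarrow> real \<Rightarrow> real set" where
  "trigger_set N a xh xt \<phi>1 \<phi>2 \<epsilon> j s =
     {t. t > s \<and>
         \<phi>1 * (norm (xh j s - xh j t))\<^sup>2
           \<ge> \<phi>2 * (norm (\<Sum>l\<in>nbrs N a j. a j l *\<^sub>R (xt l t - xh j s)))\<^sup>2 + \<epsilon> / real N}"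

end

theory Submission
  imports Defs
begin

text \<open>Between two events the sampled state is frozen, so the trigger condition can only
  fire once the observer state itself has drifted by at least \<open>sqrt (\<epsilon> / (N \<phi>1))\<close>.
  The right-hand side of the observer is bounded by \<open>e2max\<close>, hence the observer state
  is \<open>e2max\<close>-Lipschitz, and drifting that far takes time at least
  \<open>sqrt (\<epsilon> / (N \<phi>1)) / e2max\<close>. The observer is differentiable only off the
  (countable, possibly accumulating) set of event and switching times, which is why a mean
  value inequality with countably many exceptions is needed.\<close>

lemma last_level_point:
  fixes g :: "real \<Rightarrow> real"
  assumes cont: "continuous_on {a..b} g" and ab: "a \<le> b" and v: "g a \<le> v" "v < g b"
  shows "\<exists>x\<in>{a..<b}. g x = v \<and> (\<forall>t\<in>{x<..b}. v < g t)"
proof -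
  define S where "S = {a..b} \<inter> g -` {..v}"
  define x where "x = Sup S"
  have aS: "a \<in> S" using ab v by (simp add: S_def)
  have bdd: "bdd_above S" by (auto simp: S_def bdd_above_def)
  have "closed S" unfolding S_def by (rule continuous_closed_preimage[OF cont]) auto
  then have xS: "x \<in> S" unfolding x_def using aS bdd closed_contains_Sup by blast
  have ax: "a \<le> x" unfolding x_def by (rule cSup_upper[OF aS bdd])
  have xb: "x < b" and gx: "g x \<le> v" using xS v by (auto simp: S_def less_le)
  have after: "v < g t" if "t \<in> {x<..b}" for t
  proof (rule ccontr)
    assume "\<not> v < g t"
    then have "t \<in> S" using that ax by (auto simp: S_def)
    then show False using cSup_upper[OF _ bdd, of t] that by (simp add: x_def)
  qed
  have "continuous_on {x..b} g" by (rule continuous_on_subset[OF cont]) (use ax in auto)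
  then obtain y where "x \<le> y" "y \<le> b" "g y = v"
    using IVT'[of g x v b] gx v xb by auto
  with after have "g x = v" by (metis greaterThanAtMost_iff less_eq_real_def less_irrefl)
  with ax xb after show ?thesis by auto
qed

text \<open>Distinct levels have distinct last level points, and there are uncountably many levels.\<close>

lemma last_level_point_avoiding_countable:
  fixes g :: "real \<Rightarrow> real"
  assumes cont: "continuous_on {a..b} g" and ab: "a \<le> b" and gab: "g a < g b"
    and E: "countable E"
  shows "\<exists>x\<in>{a<..<b} - E. \<forall>t\<in>{x<..b}. g x < g t"
proof -
  have "\<forall>v\<in>{g a<..<g b}. \<exists>x. x \<in> {a..<b} \<and> g x = v \<and> (\<forall>t\<in>{x<..b}. v < g t)"
  proof
    fix v assume "v \<in> {g a<..<g b}"
    then show "\<exists>x. x \<in> {a..<b} \<and> g x = v \<and> (\<forall>t\<in>{x<..b}. v < g t)"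
      using last_level_point[OF cont ab, of v] by (auto simp: Bex_def)
  qed
  from bchoice[OF this] obtain p where "\<forall>v\<in>{g a<..<g b}.
      p v \<in> {a..<b} \<and> g (p v) = v \<and> (\<forall>t\<in>{p v<..b}. v < g t)"
    by blast
  note p = this[rule_format]
  have "inj_on p {g a<..<g b}"
  proof (rule inj_onI)
    fix v w assume v: "v \<in> {g a<..<g b}" and w: "w \<in> {g a<..<g b}" and "p v = p w"
    then have "g (p v) = g (p w)" by simp
    then show "v = w" using p[OF v] p[OF w] by simp
  qed
  moreover have "uncountable {g a<..<g b}" using gab by (simp add: uncountable_open_interval)
  ultimately have "uncountable (p ` {g a<..<g b})" by (simp add: countable_image_inj_eq)
  then have "\<not> p ` {g a<..<g b} \<subseteq> E" using E countable_subset by blast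
  then obtain v where v: "v \<in> {g a<..<g b}" "p v \<notin> E" by blast
  then have "a < p v" using p[OF v(1)] by (cases "p v = a") auto
  with p[OF v(1)] v show ?thesis by (intro bexI[of _ "p v"]) auto
qed

lemma differentiable_bound_countable_strict:
  fixes f :: "real \<Rightarrow> 'a::real_normed_vector"
  assumes ab: "a \<le> b" and E: "countable E" and cont: "continuous_on {a..b} f"
    and der: "\<And>x. x \<in> {a<..<b} - E \<Longrightarrow> (f has_vector_derivative f' x) (at x)"
    and bd: "\<And>x. x \<in> {a<..<b} - E \<Longrightarrow> norm (f' x) \<le> M"
    and cM: "M < c"
  shows "norm (f b - f a) \<le> c * (b - a)"
proof (rule ccontr)
  define g where "g t = norm (f t - f a) - c * (t - a)" for t
  assume "\<not> norm (f b - f a) \<le> c * (b - a)"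
  then have "g a < g b" by (simp add: g_def)
  moreover have "continuous_on {a..b} g" unfolding g_def by (intro continuous_intros cont)
  ultimately obtain x where x: "x \<in> {a<..<b} - E" and rec: "\<And>t. t \<in> {x<..b} \<Longrightarrow> g x < g t"
    using last_level_point_avoiding_countable[OF _ ab _ E] by blast
  have "(f has_derivative (\<lambda>h. h *\<^sub>R f' x)) (at x)"
    using der[OF x] by (simp add: has_vector_derivative_def)
  then obtain r where r: "r > 0" and lin: "\<And>y. norm (y - x) < r \<Longrightarrow>
      norm (f y - f x - (y - x) *\<^sub>R f' x) \<le> ((c - M) / 2) * norm (y - x)"
    unfolding has_derivative_at_alt using cM by (metis half_gt_zero diff_gt_0_iff_gt)
  define y where "y = x + min (r / 2) (b - x)"
  have y: "x < y" "y \<le> b" "norm (y - x) < r" using r x by (auto simp: y_def)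
  have "norm (f y - f x) \<le> norm ((y - x) *\<^sub>R f' x) + ((c - M) / 2) * (y - x)"
    using lin[OF y(3)] norm_triangle_ineq2[of "f y - f x" "(y - x) *\<^sub>R f' x"] y by simp
  also have "\<dots> \<le> (y - x) * M + ((c - M) / 2) * (y - x)"
    using y bd[OF x] by (simp add: mult_left_mono)
  also have "\<dots> < c * (y - x)"
  proof -
    have "0 < (c - M) * (y - x)" using y cM by simp
    then show ?thesis by (simp add: field_simps)
  qed
  finally have "g y < g x"
    using norm_triangle_ineq[of "f x - f a" "f y - f x"] by (simp add: g_def algebra_simps)
  with rec[of y] y show False by auto
qed

lemma differentiable_bound_countable:
  fixes f :: "real \<Rightarrow> 'a::real_normed_vector"
  assumes ab: "a \<le> b" and E: "countable E" and cont: "continuous_on {a..b} f"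
    and der: "\<And>x. x \<in> {a<..<b} - E \<Longrightarrow> (f has_vector_derivative f' x) (at x)"
    and bd: "\<And>x. x \<in> {a<..<b} - E \<Longrightarrow> norm (f' x) \<le> M"
  shows "norm (f b - f a) \<le> M * (b - a)"
proof (cases "a = b")
  case False
  then have ba: "b - a > 0" using ab by simp
  show ?thesis
  proof (rule field_le_epsilon)
    fix e :: real assume "e > 0"
    then have "norm (f b - f a) \<le> (M + e / (b - a)) * (b - a)"
      using ba by (intro differentiable_bound_countable_strict[OF ab E cont der bd]) auto
    also have "\<dots> = M * (b - a) + e" using ba by (simp add: field_simps)
    finally show "norm (f b - f a) \<le> M * (b - a) + e" .
  qed
qed simp

lemma norm_matrix_squared: "(norm A)\<^sup>2 = (\<Sum>i\<in>UNIV. \<Sum>j\<in>UNIV. (A $ i $ j)\<^sup>2)"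
  for A :: "real^'n^'m"
  by (simp add: norm_vec_def L2_set_def sum_nonneg)

lemma norm_transpose: "norm (transpose A) = norm A"
  for A :: "real^'n^'m"
proof -
  have "(norm (transpose A))\<^sup>2 = (norm A)\<^sup>2"
    by (simp add: norm_matrix_squared transpose_def sum.swap[of _ "UNIV :: 'n set"])
  then show ?thesis by (metis norm_ge_zero power2_eq_iff_nonneg)
qed

lemma norm_matrix_vector_mult_le: "norm (A *v x) \<le> norm A * norm x"
  for A :: "real^'n^'m"
proof -
  have "((A *v x) $ i)\<^sup>2 \<le> (norm (A $ i))\<^sup>2 * (norm x)\<^sup>2" for i
  proof -
    have "\<bar>A $ i \<bullet> x\<bar> \<le> norm (A $ i) * norm x" by (rule Cauchy_Schwarz_ineq2)
    then have "\<bar>A $ i \<bullet> x\<bar>\<^sup>2 \<le> (norm (A $ i) * norm x)\<^sup>2" by (rule power_mono) simp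
    then show ?thesis
      by (simp add: matrix_vector_mult_def inner_vec_def power_mult_distrib)
  qed
  then have "(norm (A *v x))\<^sup>2 \<le> (\<Sum>i\<in>UNIV. (norm (A $ i))\<^sup>2 * (norm x)\<^sup>2)"
    unfolding norm_vec_def L2_set_def by (simp add: sum_nonneg sum_mono)
  also have "\<dots> = (norm A * norm x)\<^sup>2"
    by (simp add: norm_vec_def L2_set_def sum_distrib_right sum_nonneg power_mult_distrib)
  finally show ?thesis by (rule power2_le_imp_le) simp
qed

lemma norm_observer_field_le:
  fixes W :: "real^'n^'l" and K :: "real^'n^'n" and C :: "real^'n^'m"
  shows "norm (transpose W *v v + K *v (z - transpose C *v e))
    \<le> norm W * norm v + norm K * norm z + norm (K ** transpose C) * norm e"
proof -
  have distrib: "K *v (z - transpose C *v e) = K *v z - (K ** transpose C) *v e"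
    by (simp only: matrix_vector_mult_diff_distrib matrix_vector_mul_assoc)
  have "norm (transpose W *v v + K *v (z - transpose C *v e))
      \<le> norm (transpose W *v v) + norm (K *v z) + norm ((K ** transpose C) *v e)"
    unfolding distrib using norm_triangle_ineq[of "transpose W *v v" "K *v z - (K ** transpose C) *v e"]
      norm_triangle_ineq4[of "K *v z" "(K ** transpose C) *v e"] by linarith
  also have "\<dots> \<le> norm W * norm v + norm K * norm z + norm (K ** transpose C) * norm e"
    using norm_matrix_vector_mult_le[of "transpose W"] norm_matrix_vector_mult_le[of K]
      norm_matrix_vector_mult_le[of "K ** transpose C"]
    by (simp add: norm_transpose add_mono)
  finally show ?thesis .
qed

lemma differentiable_bound_countable_atLeast:
  fixes f :: "real \<Rightarrow> 'a::real_normed_vector"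
  assumes E: "countable E" and cont: "continuous_on {c..} f"
    and der: "\<And>x. c < x \<Longrightarrow> x \<notin> E \<Longrightarrow> (f has_vector_derivative f' x) (at x)"
    and bd: "\<And>x. c \<le> x \<Longrightarrow> norm (f' x) \<le> M"
    and st: "c \<le> s" "s \<le> t"
  shows "norm (f t - f s) \<le> M * (t - s)"
proof (rule differentiable_bound_countable[where f' = f', OF st(2) E])
  show "continuous_on {s..t} f" by (rule continuous_on_subset[OF cont]) (use st in auto)
qed (use der bd st in auto)

lemma trigger_set_ge_drift_time:
  assumes t: "t \<in> trigger_set N a xh xt \<phi>1 \<phi>2 \<epsilon> j s"
    and \<phi>1: "\<phi>1 > 0" and \<phi>2: "\<phi>2 \<ge> 0" and L: "L > 0"
    and drift: "norm (xh j t - xh j s) \<le> L * (t - s)"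
  shows "s + (1 / L) * sqrt (\<epsilon> / (real N * \<phi>1)) \<le> t"
proof -
  let ?z = "\<Sum>l\<in>nbrs N a j. a j l *\<^sub>R (xt l t - xh j s)"
  have "s < t" and fired: "\<phi>2 * (norm ?z)\<^sup>2 + \<epsilon> / real N \<le> \<phi>1 * (norm (xh j s - xh j t))\<^sup>2"
    using t by (simp_all add: trigger_set_def)
  have "0 \<le> \<phi>2 * (norm ?z)\<^sup>2" using \<phi>2 by simp
  with fired have "\<epsilon> / real N \<le> \<phi>1 * (norm (xh j t - xh j s))\<^sup>2"
    by (simp add: norm_minus_commute)
  also have "\<dots> \<le> \<phi>1 * (L * (t - s))\<^sup>2"
    using drift \<phi>1 by (simp add: power_mono)
  finally have "\<epsilon> / real N \<le> (L * (t - s))\<^sup>2 * \<phi>1" by (simp only: mult.commute)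
  then have "\<epsilon> / (real N * \<phi>1) \<le> (L * (t - s))\<^sup>2"
    unfolding divide_divide_eq_left[symmetric] using pos_divide_le_eq[OF \<phi>1] by blast
  then have "sqrt (\<epsilon> / (real N * \<phi>1)) \<le> L * (t - s)"
    using L \<open>s < t\<close> by (intro real_le_lsqrt) auto
  then show ?thesis using L by (simp add: field_simps)
qed

theorem theorem2:
  fixes N :: nat and a :: "nat \<Rightarrow> nat \<Rightarrow> real"
    and x0 :: "real \<Rightarrow> real^'n" and f :: "real^'n \<Rightarrow> real^'n" and d :: "real \<Rightarrow> real^'n"
    and dmax :: real and D :: "(real^'n) set"
    and W0 :: "real^'n^'L" and \<sigma> :: "real^'p \<Rightarrow> real^'L" and \<Phi> :: "real^'n \<Rightarrow> real^'p"
    and eps :: "real^'n \<Rightarrow> real^'n"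
    and C :: "nat \<Rightarrow> real^'n^'m"
    and xh xt :: "nat \<Rightarrow> real \<Rightarrow> real^'n"
    and What :: "nat \<Rightarrow> real \<Rightarrow> real^'n^'L"
    and Phih :: "nat \<Rightarrow> real \<Rightarrow> real^'n \<Rightarrow> real^'p"
    and T :: "nat \<Rightarrow> nat \<Rightarrow> real"
    and tk :: "nat \<Rightarrow> nat \<Rightarrow> real"
    and K1 :: "real^'n^'n"
    and \<Gamma> :: "nat \<Rightarrow> real^'L^'L"
    and proj :: "real^'n^'L \<Rightarrow> real^'n^'L \<Rightarrow> real^'n^'L"
    and \<omega>bar \<kappa> k2 \<epsilon> \<phi>1 \<phi>2 e2max :: real
    and i :: nat
  assumes adj: "valid_adjacency N a" and conn: "graph_connected N a"
    and x0_ode: "\<forall>t\<ge>0. (x0 has_vector_derivative (f (x0 t) + d t)) (at t within {0..})"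
    and f_lip: "local_lipschitz UNIV UNIV (\<lambda>_::real. f)"
    and d_cont: "continuous_on {0..} d" and d_bound: "\<forall>t\<ge>0. norm (d t) \<le> dmax"
    and D_compact: "compact D" and x0_in_D: "\<forall>t\<ge>0. x0 t \<in> D"
    and f_nn: "\<forall>x\<in>D. f x = transpose W0 *v \<sigma> (\<Phi> x) + eps x"
    and \<sigma>_cont: "continuous_on UNIV \<sigma>" and \<sigma>_bdd: "bounded (range \<sigma>)"
    and eps_bdd: "bounded (eps ` D)"
    and K1_sym: "transpose K1 = K1"
    and \<kappa>_pos: "\<kappa> > 0" and k2_gt: "k2 > 1 / \<kappa>" and \<epsilon>_pos: "\<epsilon> > 0"
    and \<phi>1_def: "\<phi>1 = k2 / 2 + \<kappa> / 2 * (kron_norm N (lap N a) K1)\<^sup>2"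
    and \<phi>2_def: "\<phi>2 = k2 / (4 * (kron_norm N (lap N a) (mat 1 :: real^'n^'n))\<^sup>2)"
    and \<Gamma>_pd: "\<forall>j\<in>{1..N}. transpose (\<Gamma> j) = \<Gamma> j \<and> (\<forall>v. v \<noteq> 0 \<longrightarrow> v \<bullet> (\<Gamma> j *v v) > 0)"
    and proj_cont: "continuous_on UNIV (\<lambda>(\<mu>, \<omega>). proj \<mu> \<omega>)"
    and events: "\<forall>j\<in>{1..N}. tk j 0 = 0 \<and> strict_mono (tk j)"
    and zoh: "\<forall>j\<in>{1..N}. \<forall>k. \<forall>t\<in>{tk j k..<tk j (Suc k)}. xt j t = xh j (tk j k)"
    and switching: "\<forall>j\<in>{1..N}. T j 0 = 0 \<and> strict_mono (T j)
        \<and> (\<forall>p. \<forall>t\<in>{T j p..<T j (Suc p)}. Phih j t = Phih j (T j p))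
        \<and> (\<forall>t. continuous_on UNIV (Phih j t))"
    and observer: "\<forall>j\<in>{1..N}. continuous_on {0..} (xh j) \<and>
        (\<forall>t>0. t \<notin> range (tk j) \<union> (\<Union>l\<in>nbrs N a j. range (tk l)) \<union> range (T j) \<longrightarrow>
          (xh j has_vector_derivative
             (transpose (What j t) *v \<sigma> (Phih j t (xh j t))
              + K1 *v (zsig N a xt j t - transpose (C j) *v e3sig C x0 xh j t))) (at t))"
    and weights: "\<forall>j\<in>{1..N}. continuous_on {0..} (What j) \<and> (\<forall>t\<ge>0. norm (What j t) \<le> \<omega>bar) \<and>
        (\<forall>t>0. t \<notin> range (T j) \<longrightarrow>
          (What j has_vector_derivative
             proj (- (\<Gamma> j ** outer (\<sigma> (Phih j t (xh j t))) (transpose (C j) *v e3sig C x0 xh j t)))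
                  (What j t)) (at t))"
    and trigger: "\<forall>j\<in>{1..N}. \<forall>k.
        trigger_set N a xh xt \<phi>1 \<phi>2 \<epsilon> j (tk j k) \<noteq> {} \<and>
        tk j (Suc k) = Inf (trigger_set N a xh xt \<phi>1 \<phi>2 \<epsilon> j (tk j k))"
    and i_in: "i \<in> {1..N}"
    and e2max_pos: "e2max > 0"
    and e2max_bound: "\<forall>t\<ge>0. norm (What i t) * norm (\<sigma> (Phih i t (xh i t)))
        + norm K1 * norm (zsig N a xt i t)
        + norm (K1 ** transpose (C i)) * norm (e3sig C x0 xh i t) \<le> e2max"
  shows "\<forall>k. tk i (Suc k) - tk i k \<ge> (1 / e2max) * sqrt (\<epsilon> / (real N * \<phi>1))"
proof
  fix k
  define s where "s = tk i k"
  have s_nonneg: "0 \<le> s"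
    using events i_in strict_mono_less_eq[of "tk i" 0 k] by (auto simp: s_def)
  have "k2 > 0" using k2_gt \<kappa>_pos by (meson less_trans zero_less_divide_1_iff)
  then have \<phi>1_pos: "\<phi>1 > 0" and \<phi>2_nonneg: "\<phi>2 \<ge> 0"
    using \<phi>1_def \<phi>2_def \<kappa>_pos by (simp_all add: add_pos_nonneg)
  define F where "F x = transpose (What i x) *v \<sigma> (Phih i x (xh i x))
      + K1 *v (zsig N a xt i x - transpose (C i) *v e3sig C x0 xh i x)" for x
  have F_bound: "norm (F x) \<le> e2max" if "0 \<le> x" for x
    unfolding F_def using e2max_bound that by (intro order_trans[OF norm_observer_field_le]) auto
  define E where "E = range (tk i) \<union> (\<Union>l\<in>nbrs N a i. range (tk l)) \<union> range (T i)"
  have "countable E" by (auto simp: E_def nbrs_def intro: countable_finite)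
  moreover have "continuous_on {0..} (xh i)"
    and "\<And>x. 0 < x \<Longrightarrow> x \<notin> E \<Longrightarrow> (xh i has_vector_derivative F x) (at x)"
    using observer i_in unfolding E_def F_def by auto
  ultimately have drift: "norm (xh i t - xh i s) \<le> e2max * (t - s)" if "s \<le> t" for t
    by (rule differentiable_bound_countable_atLeast[where f' = F, OF _ _ _ F_bound s_nonneg that])
  have "s + (1 / e2max) * sqrt (\<epsilon> / (real N * \<phi>1)) \<le> t"
    if "t \<in> trigger_set N a xh xt \<phi>1 \<phi>2 \<epsilon> i s" for t
  proof (rule trigger_set_ge_drift_time[OF that \<phi>1_pos \<phi>2_nonneg e2max_pos drift])
    show "s \<le> t" using that by (simp add: trigger_set_def)
  qed
  moreover have "trigger_set N a xh xt \<phi>1 \<phi>2 \<epsilon> i s \<noteq> {}"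
    and "tk i (Suc k) = Inf (trigger_set N a xh xt \<phi>1 \<phi>2 \<epsilon> i s)"
    using trigger i_in by (simp_all add: s_def)
  ultimately have "s + (1 / e2max) * sqrt (\<epsilon> / (real N * \<phi>1)) \<le> tk i (Suc k)"
    by (simp add: cInf_greatest)
  then show "tk i (Suc k) - tk i k \<ge> (1 / e2max) * sqrt (\<epsilon> / (real N * \<phi>1))"
    by (simp add: s_def)
qed

end
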